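(* Let $n\ge 1$, let $n_0>0$ and $N_+\in\mathbb{R}^n$ with positive entries, let $M_1>0$, and let $L\in\mathbb{R}^n$ have finite entries. For $A\in\mathbb{R}^n$ set $a_0(A)=M_1-\mathbf{1}^\top A$, $b_0(A)=n_0-a_0(A)$, $B(A)=N_+-A$, and $$G(A)=-L^\top A+f(a_0(A))+\sum_{i=1}^n f(B_i(A))+\sum_{i=1}^n f(A_i)+f(b_0(A)),$$ where $f(x)=x\log x-x$ for $x>0$ and $f(0)=0$. Let $\mathcal{D}=\{A\in\mathbb{R}^n: 0\le A\le N_+ \text{ componentwise},\ a_0(A)\ge 0,\ b_0(A)\ge 0\}$ be the domain of $G$. Suppose that some $A\in\mathbb{R}^n$ satisfies $N_+>A$ componentwise, $M_1>\mathbf{1}^\top A$, and $n_0>a_0(A)$. Then $G$ has a unique global minimizer on $\mathcal{D}$.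
   Context: This is the Greenland–Longnecker pseudo-count problem for log odds ratios: $n$ alternative exposure levels, $n_0$ total subjects at the reference exposure, $N_+$ total subjects at the alternative exposures, $M_1$ total cases, $L$ reported log odds ratios; $A$ are pseudo-cases at alternative exposures, $a_0$ pseudo-cases at the reference exposure, $B$ and $b_0$ the corresponding non-cases. The gradient of $G$ is $g(A)=-L-\log(a_0(A))\mathbf{1}-\log(B(A))+\log(A)+\log(b_0(A))\mathbf{1}$ (componentwise logarithms), whose root the Greenland–Longnecker Newton method seeks. $\mathbf{1}$ denotes the all-ones vector in $\mathbb{R}^n$. *)

theory Defs
  imports "HOL-Analysis.Analysis"
begin

text \<open>f(x) = x log x - x for x > 0, f(0) = 0 (only used on x \<ge> 0).\<close>
definition gl_f :: "real \<Rightarrow> real" where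
  "gl_f x = (if x > 0 then x * ln x - x else 0)"

definition gl_a0 :: "real \<Rightarrow> real ^ 'n \<Rightarrow> real" where
  "gl_a0 M1 A = M1 - (\<Sum>i\<in>UNIV. A $ i)"

definition gl_b0 :: "real \<Rightarrow> real \<Rightarrow> real ^ 'n \<Rightarrow> real" where
  "gl_b0 n0 M1 A = n0 - gl_a0 M1 A"

definition gl_B :: "real ^ 'n \<Rightarrow> real ^ 'n \<Rightarrow> real ^ 'n" where
  "gl_B Np A = Np - A"

definition gl_G :: "real \<Rightarrow> real ^ 'n \<Rightarrow> real \<Rightarrow> real ^ 'n \<Rightarrow> real ^ 'n \<Rightarrow> real" where
  "gl_G n0 Np M1 L A =
     - (L \<bullet> A) + gl_f (gl_a0 M1 A) + (\<Sum>i\<in>UNIV. gl_f (gl_B Np A $ i))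
     + (\<Sum>i\<in>UNIV. gl_f (A $ i)) + gl_f (gl_b0 n0 M1 A)"

definition gl_D :: "real \<Rightarrow> real ^ 'n \<Rightarrow> real \<Rightarrow> (real ^ 'n) set" where
  "gl_D n0 Np M1 = {A. (\<forall>i. 0 \<le> A $ i \<and> A $ i \<le> Np $ i) \<and>
                        gl_a0 M1 A \<ge> 0 \<and> gl_b0 n0 M1 A \<ge> 0}"

end

theory Submission
  imports Defs
begin

(* G is continuous on the compact polytope D, so it attains its minimum as soon as D is nonempty,
   and a point of D is obtained by scaling N_+ down to a suitable total mass.  Since f' = ln is
   strictly increasing, f is strictly convex on [0, \<infinity>); every term of G is f applied to an affine
   function of A, and sum_i f(A_i) is strictly convex, so G is strictly convex on the convex set D
   and two distinct minimizers would have a strictly better midpoint. *)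

definition strictly_convex_on :: "'a::real_vector set \<Rightarrow> ('a \<Rightarrow> real) \<Rightarrow> bool" where
  "strictly_convex_on S f \<longleftrightarrow> convex S \<and>
     (\<forall>x\<in>S. \<forall>y\<in>S. x \<noteq> y \<longrightarrow>
        (\<forall>t. 0 < t \<longrightarrow> t < 1 \<longrightarrow> f ((1 - t) *\<^sub>R x + t *\<^sub>R y) < (1 - t) * f x + t * f y))"

lemma strictly_convex_onD:
  assumes "strictly_convex_on S f" "x \<in> S" "y \<in> S" "x \<noteq> y" "0 < t" "t < 1"
  shows "f ((1 - t) *\<^sub>R x + t *\<^sub>R y) < (1 - t) * f x + t * f y"
  using assms by (auto simp: strictly_convex_on_def)

lemma strictly_convex_on_imp_convex_on:
  assumes "strictly_convex_on S f"
  shows "convex_on S f"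
proof (rule convex_onI)
  show "convex S" using assms by (simp add: strictly_convex_on_def)
  fix t :: real and x y assume t: "0 < t" "t < 1" and "x \<in> S" "y \<in> S"
  show "f ((1 - t) *\<^sub>R x + t *\<^sub>R y) \<le> (1 - t) * f x + t * f y"
  proof (cases "x = y")
    case True
    then show ?thesis by (simp flip: scaleR_left_distrib distrib_right)
  qed (use strictly_convex_onD[OF assms] t \<open>x \<in> S\<close> \<open>y \<in> S\<close> in \<open>simp add: less_imp_le\<close>)
qed

lemma strictly_convex_on_add:
  assumes f: "convex_on S f" and g: "strictly_convex_on S g"
  shows "strictly_convex_on S (\<lambda>x. f x + g x)"
  unfolding strictly_convex_on_def
proof (intro conjI ballI allI impI)
  show "convex S" using f by (rule convex_on_imp_convex)
  fix x y and t :: real assume "x \<in> S" "y \<in> S" "x \<noteq> y" "0 < t" "t < 1"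
  then show "f ((1 - t) *\<^sub>R x + t *\<^sub>R y) + g ((1 - t) *\<^sub>R x + t *\<^sub>R y)
      < (1 - t) * (f x + g x) + t * (f y + g y)"
    using convex_onD[OF f, of t x y] strictly_convex_onD[OF g, of x y t]
    by (simp add: algebra_simps)
qed

lemma strictly_convex_on_minimizer_unique:
  assumes f: "strictly_convex_on S f" and "x \<in> S" "y \<in> S"
    and "\<forall>z\<in>S. f x \<le> f z" "\<forall>z\<in>S. f y \<le> f z"
  shows "x = y"
proof (rule ccontr)
  assume "x \<noteq> y"
  let ?m = "(1 - 1/2) *\<^sub>R x + (1/2) *\<^sub>R y"
  have "?m \<in> S"
    using f assms(2,3) unfolding strictly_convex_on_def by (intro convexD) auto
  moreover have "f ?m < (1 - 1/2) * f x + (1/2) * f y"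
    using strictly_convex_onD[OF f assms(2,3) \<open>x \<noteq> y\<close>, of "1/2"] by simp
  ultimately show False using assms(4,5) by force
qed

theorem strictly_convex_on_compact_ex1_minimizer:
  assumes "compact S" "S \<noteq> {}" "continuous_on S f" "strictly_convex_on S f"
  shows "\<exists>!x. x \<in> S \<and> (\<forall>y\<in>S. f x \<le> f y)"
  using continuous_attains_inf[OF assms(1-3)] strictly_convex_on_minimizer_unique[OF assms(4)]
  by blast

lemma strictly_convex_on_realI:
  fixes f f' :: "real \<Rightarrow> real"
  assumes A: "convex A" and cont: "continuous_on A f"
    and deriv: "\<And>x. x \<in> interior A \<Longrightarrow> (f has_real_derivative f' x) (at x)"
    and mono: "\<And>x y. x \<in> interior A \<Longrightarrow> y \<in> interior A \<Longrightarrow> x < y \<Longrightarrow> f' x < f' y"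
  shows "strictly_convex_on A f"
proof -
  have mvt: "\<exists>\<xi>\<in>{a<..<b}. f b - f a = (b - a) * f' \<xi>" if ab: "a < b" and sub: "{a..b} \<subseteq> A" for a b
  proof -
    have int: "{a<..<b} \<subseteq> interior A"
      using interior_mono[OF sub] by simp
    obtain l \<xi> where "a < \<xi>" "\<xi> < b" "DERIV f \<xi> :> l" "f b - f a = (b - a) * l"
      using MVT[OF ab continuous_on_subset[OF cont sub]] int deriv
      by (metis greaterThanLessThan_iff real_differentiable_def subsetD)
    then show ?thesis
      using DERIV_unique deriv int by (metis greaterThanLessThan_iff subsetD)
  qed
  have less: "f ((1 - t) * x + t * y) < (1 - t) * f x + t * f y"
    if xy: "x \<in> A" "y \<in> A" "x < y" and t: "0 < t" "t < 1" for x y t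
  proof -
    define z where "z = (1 - t) * x + t * y"
    have zx: "z - x = t * (y - x)" and yz: "y - z = (1 - t) * (y - x)"
      by (simp_all add: z_def algebra_simps)
    have xz: "x < z" and zy: "z < y"
      using zx yz xy t by (metis diff_gt_0_iff_gt mult_pos_pos)+
    have Ixy: "{x..y} \<subseteq> A"
      using A xy by (metis closed_segment_eq_real_ivl1 convex_contains_segment less_imp_le)
    obtain \<xi> where \<xi>: "\<xi> \<in> {x<..<z}" "f z - f x = (z - x) * f' \<xi>"
      using mvt[OF xz] Ixy zy by fastforce
    obtain \<eta> where \<eta>: "\<eta> \<in> {z<..<y}" "f y - f z = (y - z) * f' \<eta>"
      using mvt[OF zy] Ixy xz by fastforce
    have "{x<..<y} \<subseteq> interior A"
      using interior_mono[OF Ixy] by simp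
    then have "f' \<xi> < f' \<eta>"
      using \<xi>(1) \<eta>(1) zy xz by (intro mono) auto
    then have "(1 - t) * (t * (y - x)) * f' \<xi> < t * ((1 - t) * (y - x)) * f' \<eta>"
      using xy t by (simp add: mult.assoc)
    then have "(1 - t) * (f z - f x) < t * (f y - f z)"
      using \<xi>(2) \<eta>(2) zx yz by (simp add: mult.assoc)
    then show ?thesis
      unfolding z_def[symmetric] by (simp add: algebra_simps)
  qed
  show ?thesis
    unfolding strictly_convex_on_def
  proof (intro conjI ballI allI impI)
    fix x y t :: real assume "x \<in> A" "y \<in> A" "x \<noteq> y" "0 < t" "t < 1"
    then consider "x < y" | "y < x" by linarith
    then show "f ((1 - t) *\<^sub>R x + t *\<^sub>R y) < (1 - t) * f x + t * f y"
    proof cases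
      case 1
      then show ?thesis using less \<open>x \<in> A\<close> \<open>y \<in> A\<close> \<open>0 < t\<close> \<open>t < 1\<close> by simp
    next
      case 2
      then show ?thesis using less[of y x "1 - t"] \<open>x \<in> A\<close> \<open>y \<in> A\<close> \<open>0 < t\<close> \<open>t < 1\<close>
        by (simp add: add.commute)
    qed
  qed (fact A)
qed

lemma convex_on_compose_affine:
  assumes f: "convex_on T f" and "convex S" and "h ` S \<subseteq> T"
    and affine: "\<And>x y t. h ((1 - t) *\<^sub>R x + t *\<^sub>R y) = (1 - t) *\<^sub>R h x + t *\<^sub>R h y"
  shows "convex_on S (\<lambda>x. f (h x))"
proof (rule convex_onI)
  fix t :: real and x y assume "0 < t" "t < 1" "x \<in> S" "y \<in> S"
  then show "f (h ((1 - t) *\<^sub>R x + t *\<^sub>R y)) \<le> (1 - t) * f (h x) + t * f (h y)"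
    unfolding affine using assms(3) by (intro convex_onD[OF f]) auto
qed fact

lemma convex_on_sum_fun:
  assumes "finite I" "convex S" "\<And>i. i \<in> I \<Longrightarrow> convex_on S (f i)"
  shows "convex_on S (\<lambda>x. \<Sum>i\<in>I. f i x)"
  using assms by (induction I rule: finite_induct) (auto simp: convex_on_const)

lemma strictly_convex_on_sum_components:
  fixes S :: "('a::real_vector ^ 'n) set"
  assumes f: "strictly_convex_on T f" and "convex S" and ST: "\<And>x i. x \<in> S \<Longrightarrow> x $ i \<in> T"
  shows "strictly_convex_on S (\<lambda>x. \<Sum>i\<in>UNIV. f (x $ i))"
  unfolding strictly_convex_on_def
proof (intro conjI ballI allI impI)
  fix x y and t :: real assume xy: "x \<in> S" "y \<in> S" "x \<noteq> y" and t: "0 < t" "t < 1"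
  obtain j where j: "x $ j \<noteq> y $ j"
    using xy(3) by (metis vec_eq_iff)
  have "f ((1 - t) *\<^sub>R x $ i + t *\<^sub>R y $ i) \<le> (1 - t) * f (x $ i) + t * f (y $ i)" for i
    using convex_onD[OF strictly_convex_on_imp_convex_on[OF f]] ST xy t by simp
  moreover have "f ((1 - t) *\<^sub>R x $ j + t *\<^sub>R y $ j) < (1 - t) * f (x $ j) + t * f (y $ j)"
    using strictly_convex_onD[OF f ST ST j t] xy by simp
  ultimately have "(\<Sum>i\<in>UNIV. f ((1 - t) *\<^sub>R x $ i + t *\<^sub>R y $ i))
      < (\<Sum>i\<in>UNIV. (1 - t) * f (x $ i) + t * f (y $ i))"
    by (intro sum_strict_mono_ex1) auto
  then show "(\<Sum>i\<in>UNIV. f (((1 - t) *\<^sub>R x + t *\<^sub>R y) $ i))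
      < (1 - t) * (\<Sum>i\<in>UNIV. f (x $ i)) + t * (\<Sum>i\<in>UNIV. f (y $ i))"
    by (simp add: sum.distrib sum_distrib_left)
qed fact

lemma gl_f_has_real_derivative:
  assumes "0 < x"
  shows "(gl_f has_real_derivative ln x) (at x)"
proof -
  have "((\<lambda>x. x * ln x - x) has_real_derivative ln x) (at x)"
    using assms by (auto intro!: derivative_eq_intros)
  then show ?thesis
    by (rule has_field_derivative_transform_within_open[where S = "{0<..}"])
      (use assms in \<open>auto simp: gl_f_def\<close>)
qed

lemma tendsto_gl_f_at_right_0: "(gl_f \<longlongrightarrow> 0) (at_right 0)"
proof -
  have "((\<lambda>x::real. ln (inverse x) / inverse x) \<longlongrightarrow> 0) (at_right 0)"
    using filterlim_at_top_to_right[THEN iffD1, OF ln_x_over_x_tendsto_0] by simp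
  then have "((\<lambda>x::real. - (ln (inverse x) / inverse x) - x) \<longlongrightarrow> - 0 - 0) (at_right 0)"
    by (intro tendsto_intros) auto
  moreover have "\<forall>\<^sub>F x in at_right 0. - (ln (inverse x) / inverse x) - x = gl_f x"
    using eventually_at_right_less[of "0::real"]
    by eventually_elim (simp add: gl_f_def ln_inverse divide_inverse)
  ultimately show ?thesis
    by (simp add: tendsto_cong)
qed

lemma continuous_on_gl_f: "continuous_on {0..} gl_f"
  unfolding continuous_on_eq_continuous_within
proof
  fix x :: real assume "x \<in> {0..}"
  show "continuous (at x within {0..}) gl_f"
  proof (cases "x = 0")
    case True
    then show ?thesis
      using tendsto_gl_f_at_right_0
      by (simp add: continuous_within at_within_Ici_at_right gl_f_def)
  next
    case False
    with \<open>x \<in> {0..}\<close> have "isCont gl_f x"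
      by (intro DERIV_isCont[OF gl_f_has_real_derivative]) auto
    then show ?thesis by (rule continuous_at_imp_continuous_at_within)
  qed
qed

lemma strictly_convex_on_gl_f: "strictly_convex_on {0..} gl_f"
  by (rule strictly_convex_on_realI[where f' = ln, OF convex_real_interval(1) continuous_on_gl_f])
    (auto intro: gl_f_has_real_derivative)

lemma gl_D_eq:
  "gl_D n0 Np M1 = cbox 0 Np \<inter> {A. M1 - n0 \<le> (\<Sum>i\<in>UNIV. A $ i)} \<inter> {A. (\<Sum>i\<in>UNIV. A $ i) \<le> M1}"
  by (auto simp: gl_D_def gl_a0_def gl_b0_def mem_box_cart)

lemma compact_gl_D: "compact (gl_D n0 Np M1)"
proof -
  have "closed ({A::real^'n. M1 - n0 \<le> (\<Sum>i\<in>UNIV. A $ i)} \<inter> {A. (\<Sum>i\<in>UNIV. A $ i) \<le> M1})"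
    by (intro closed_Int closed_Collect_le continuous_intros)
  then show ?thesis
    unfolding gl_D_eq Int_assoc by (intro compact_Int_closed) auto
qed

lemma convex_gl_D: "convex (gl_D n0 Np M1)"
proof -
  have sum_eq_inner: "(\<Sum>i\<in>UNIV. A $ i) = (\<chi> i. 1) \<bullet> A" for A :: "real^'n"
    by (simp add: inner_vec_def)
  show ?thesis
    unfolding gl_D_eq sum_eq_inner
    by (intro convex_Int convex_box convex_halfspace_le convex_halfspace_ge)
qed

lemma gl_D_nonempty:
  assumes "0 \<le> n0" "0 \<le> M1" "\<forall>i. 0 < Np $ i"
    and "\<exists>A :: real ^ 'n. (\<forall>i. A $ i < Np $ i) \<and> gl_a0 M1 A < n0"
  shows "gl_D n0 Np M1 \<noteq> {}"
proof -
  obtain A0 :: "real^'n" where A0: "\<forall>i. A0 $ i < Np $ i" "gl_a0 M1 A0 < n0"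
    using assms(4) by blast
  define S where "S = (\<Sum>i\<in>UNIV. Np $ i)"
  define c where "c = max 0 (M1 - n0)"
  have "S > 0"
    unfolding S_def using assms(3) by (simp add: sum_pos)
  have "M1 - n0 < S"
    using A0 sum_strict_mono[of UNIV "\<lambda>i. A0 $ i" "\<lambda>i. Np $ i"] by (simp add: gl_a0_def S_def)
  then have c: "0 \<le> c" "c \<le> S" "c \<le> M1" "M1 - n0 \<le> c"
    using \<open>S > 0\<close> assms(1,2) by (auto simp: c_def)
  define A where "A = (c / S) *\<^sub>R Np"
  have "(\<Sum>i\<in>UNIV. A $ i) = c"
    using \<open>S > 0\<close> by (simp add: A_def S_def flip: sum_divide_distrib sum_distrib_left)
  moreover have "0 \<le> A $ i \<and> A $ i \<le> Np $ i" for i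
    using c \<open>S > 0\<close> assms(3) mult_left_le_one_le[of "Np $ i" "c / S"]
    by (simp add: A_def less_imp_le)
  ultimately have "A \<in> gl_D n0 Np M1"
    using c by (simp add: gl_D_def gl_a0_def gl_b0_def)
  then show ?thesis by blast
qed

lemma continuous_on_gl_G: "continuous_on (gl_D n0 Np M1) (gl_G n0 Np M1 L)"
proof -
  have comp: "continuous_on (gl_D n0 Np M1) (\<lambda>A. gl_f (h A))"
    if "continuous_on (gl_D n0 Np M1) h" "\<And>A. A \<in> gl_D n0 Np M1 \<Longrightarrow> 0 \<le> h A" for h
    using continuous_on_compose2[OF continuous_on_gl_f that(1)] that(2) by auto
  show ?thesis
    unfolding gl_G_def gl_a0_def gl_b0_def gl_B_def
    by (intro continuous_intros comp) (auto simp: gl_D_def gl_a0_def gl_b0_def)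
qed

lemma gl_a0_affine:
  "gl_a0 M1 ((1 - t) *\<^sub>R x + t *\<^sub>R y) = (1 - t) * gl_a0 M1 x + t * gl_a0 M1 y"
  by (simp add: gl_a0_def sum.distrib sum_subtractf algebra_simps flip: sum_distrib_left)

lemma gl_b0_affine:
  "gl_b0 n0 M1 ((1 - t) *\<^sub>R x + t *\<^sub>R y) = (1 - t) * gl_b0 n0 M1 x + t * gl_b0 n0 M1 y"
  unfolding gl_b0_def gl_a0_affine by (simp add: algebra_simps)

lemma strictly_convex_on_gl_G:
  fixes Np L :: "real ^ 'n"
  shows "strictly_convex_on (gl_D n0 Np M1) (gl_G n0 Np M1 L)"
proof -
  let ?D = "gl_D n0 Np M1"
  have comp: "convex_on ?D (\<lambda>A. gl_f (h A))"
    if "\<And>A. A \<in> ?D \<Longrightarrow> 0 \<le> h A"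
      and "\<And>x y t. h ((1 - t) *\<^sub>R x + t *\<^sub>R y) = (1 - t) * h x + t * h y"
    for h :: "real^'n \<Rightarrow> real"
    using convex_on_compose_affine[OF strictly_convex_on_imp_convex_on[OF strictly_convex_on_gl_f]
        convex_gl_D, of h] that by auto
  have "convex_on ?D (\<lambda>A. - (L \<bullet> A))"
    using convex_on_compose_affine[OF convex_on_ident[THEN iffD2, OF convex_UNIV] convex_gl_D,
        where h = "\<lambda>A. - (L \<bullet> A)"]
    by (simp add: algebra_simps)
  moreover have "convex_on ?D (\<lambda>A. gl_f (gl_a0 M1 A))"
    by (rule comp[OF _ gl_a0_affine]) (simp add: gl_D_def)
  moreover have "convex_on ?D (\<lambda>A. gl_f (gl_b0 n0 M1 A))"
    by (rule comp[OF _ gl_b0_affine]) (simp add: gl_D_def)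
  moreover have "convex_on ?D (\<lambda>A. \<Sum>i\<in>UNIV. gl_f (gl_B Np A $ i))"
    by (intro convex_on_sum_fun convex_gl_D comp) (auto simp: gl_D_def gl_B_def algebra_simps)
  moreover have "strictly_convex_on ?D (\<lambda>A. \<Sum>i\<in>UNIV. gl_f (A $ i))"
    by (intro strictly_convex_on_sum_components[OF strictly_convex_on_gl_f convex_gl_D])
      (simp add: gl_D_def)
  ultimately have "strictly_convex_on ?D (\<lambda>A. (- (L \<bullet> A) + gl_f (gl_a0 M1 A) + gl_f (gl_b0 n0 M1 A)
      + (\<Sum>i\<in>UNIV. gl_f (gl_B Np A $ i))) + (\<Sum>i\<in>UNIV. gl_f (A $ i)))"
    by (intro strictly_convex_on_add convex_on_add)
  moreover have "gl_G n0 Np M1 L = (\<lambda>A. (- (L \<bullet> A) + gl_f (gl_a0 M1 A) + gl_f (gl_b0 n0 M1 A)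
      + (\<Sum>i\<in>UNIV. gl_f (gl_B Np A $ i))) + (\<Sum>i\<in>UNIV. gl_f (A $ i)))"
    by (simp add: fun_eq_iff gl_G_def)
  ultimately show ?thesis by simp
qed

theorem theorem1:
  fixes n0 M1 :: real and Np L :: "real ^ 'n"
  assumes "n0 > 0" and "\<forall>i. Np $ i > 0" and "M1 > 0"
    and "\<exists>A :: real ^ 'n. (\<forall>i. Np $ i > A $ i) \<and> M1 > (\<Sum>i\<in>UNIV. A $ i)
                          \<and> n0 > gl_a0 M1 A"
  shows "\<exists>!A. A \<in> gl_D n0 Np M1 \<and>
              (\<forall>A'\<in>gl_D n0 Np M1. gl_G n0 Np M1 L A \<le> gl_G n0 Np M1 L A')"
proof (rule strictly_convex_on_compact_ex1_minimizer)
  show "gl_D n0 Np M1 \<noteq> {}"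
    using assms by (intro gl_D_nonempty) auto
qed (rule compact_gl_D continuous_on_gl_G strictly_convex_on_gl_G)+

end
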